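(* Consider the problem $\min_{x\in\mathbb{R}^n} F(x):=f(x)+g(x)$ subject to $Ax=b$, under the setting described in the context, with optimal solution $x^*$ and with $\lambda^*$ an optimal solution of $\max_\lambda d(\lambda)$ such that $d(\lambda^* )=F(x^* )$. Let $\{x^k\}$ and $\{\lambda^k\}$ be generated by the IAL framework described in the context with $\eta_k=\frac{\sigma}{k^2}$ for some constant $\sigma>0$. Then, with $\delta_k:=d(\lambda^* )-d(\lambda^k)$, $$\delta_k=\mathcal{O}\!\left(\frac1k\right),\qquad \|Ax^{k+1}-b\|^2=\mathcal{O}\!\left(\frac1k\right),\qquad |F(x^{k+1})-F(x^* )|=\mathcal{O}\!\left(\frac1{\sqrt k}\right).$$
   Context: Let $A\in\mathbb{R}^{m\times n}$ and $b\in\mathbb{R}^m$. Let $f:\mathbb{R}^n\to\mathbb{R}$ be convex and differentiable with Lipschitz continuous gradient. Let $g:\mathbb{R}^n\to\mathbb{R}\cup\{+\infty\}$ be a closed proper convex (possibly nonsmooth) function with bounded domain, and $F=f+g$. Fix a penalty parameter $\beta>0$. For $\lambda\in\mathbb{R}^m$, define $$\hat f_\beta(x;\lambda):=f(x)+\langle\lambda,Ax-b\rangle+\tfrac{\beta}{2}\|Ax-b\|^2,\qquad \mathcal{L}_\beta(x;\lambda):=\hat f_\beta(x;\lambda)+g(x),$$ and $d(\lambda):=\min_{x\in\mathbb{R}^n}\mathcal{L}_\beta(x;\lambda)$. Here $\nabla\hat f_\beta(x;\lambda)$ denotes the gradient of $\hat f_\beta$ with respect to $x$. It is assumed that strong duality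 holds between the problem and its augmented Lagrangian dual $\max_\lambda d(\lambda)$. IAL framework: choose $x^1\in\operatorname{dom} g$, $\lambda^1\in\mathbb{R}^m$, and a nonnegative sequence $\{\eta_k\}$. For $k=1,2,\dots$: find a point $x^{k+1}$ such that $$\max_{x\in\mathbb{R}^n}\Big\{\langle\nabla\hat f_\beta(x^{k+1};\lambda^k),\,x^{k+1}-x\rangle+g(x^{k+1})-g(x)\Big\}\le\eta_k,$$ and then set $\lambda^{k+1}=\lambda^k+\beta(Ax^{k+1}-b)$. *)

theory Defs
  imports "HOL-Analysis.Analysis" "HOL-Library.Landau_Symbols"
begin

text \<open>The nonsmooth part g : R^n -> R \<union> {+inf} is represented by its finite values
  on its effective domain D = dom g; outside D, g is +infinity.\<close>

definition fhat :: "(real^'n \<Rightarrow> real) \<Rightarrow> real^'n^'m \<Rightarrow> real^'m \<Rightarrow> real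
    \<Rightarrow> real^'m \<Rightarrow> real^'n \<Rightarrow> real" where
  "fhat f A b \<beta> lam x = f x + lam \<bullet> (A *v x - b) + (\<beta> / 2) * (norm (A *v x - b))^2"

definition grad_fhat :: "(real^'n \<Rightarrow> real^'n) \<Rightarrow> real^'n^'m \<Rightarrow> real^'m \<Rightarrow> real
    \<Rightarrow> real^'m \<Rightarrow> real^'n \<Rightarrow> real^'n" where
  "grad_fhat gf A b \<beta> lam x =
     gf x + transpose A *v lam + \<beta> *\<^sub>R (transpose A *v (A *v x - b))"

text \<open>Augmented Lagrangian dual function d(lam) = min_x L_beta(x; lam);
  L_beta = +inf outside D, so the minimum is taken over D.\<close>
definition dual_fun :: "(real^'n \<Rightarrow> real) \<Rightarrow> (real^'n \<Rightarrow> real) \<Rightarrow> (real^'n) set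
    \<Rightarrow> real^'n^'m \<Rightarrow> real^'m \<Rightarrow> real \<Rightarrow> real^'m \<Rightarrow> real" where
  "dual_fun f g D A b \<beta> lam = (INF x\<in>D. fhat f A b \<beta> lam x + g x)"

end

theory Submission
  imports Defs "HOL-Real_Asymp.Real_Asymp"
begin

text \<open>Inexactness makes \<open>x\<^sup>k\<^sup>+\<^sup>1\<close> an \<open>\<eta>\<^sub>k\<close>-minimiser of \<open>\<L>\<^sub>\<beta>(\<cdot>;\<lambda>\<^sup>k)\<close> up to the
  quadratic growth term \<open>\<beta>/2 \<parallel>A(z - x\<^sup>k\<^sup>+\<^sup>1)\<parallel>\<^sup>2\<close>. This gives two one-step inequalities for
  \<open>\<delta>\<^sub>k = d(\<lambda>\<^sup>*) - d(\<lambda>\<^sup>k)\<close> and \<open>r\<^sub>k = Ax\<^sup>k\<^sup>+\<^sup>1 - b\<close>: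
  \<open>\<delta>\<^sub>k\<^sub>+\<^sub>1 \<le> \<delta>\<^sub>k - \<beta>/2 \<parallel>r\<^sub>k\<parallel>\<^sup>2 + \<eta>\<^sub>k\<close> and
  \<open>2\<beta> \<delta>\<^sub>k\<^sub>+\<^sub>1 + \<parallel>\<lambda>\<^sup>k\<^sup>+\<^sup>1 - \<lambda>\<^sup>*\<parallel>\<^sup>2 \<le> \<parallel>\<lambda>\<^sup>k - \<lambda>\<^sup>*\<parallel>\<^sup>2 + 2\<beta> \<eta>\<^sub>k\<close>.
  As \<open>\<Sum> \<eta>\<^sub>k \<le> 2\<sigma>\<close>, the second telescopes to a bound on \<open>\<Sum> \<delta>\<^sub>k\<close> and on the multipliers,
  while the first makes \<open>\<delta>\<^sub>k + 2\<sigma>/k\<close> nonincreasing; together they give \<open>\<delta>\<^sub>k = O(1/k)\<close>.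
  The first inequality then bounds \<open>\<parallel>r\<^sub>k\<parallel>\<^sup>2\<close>, and sandwiching \<open>F(x\<^sup>k\<^sup>+\<^sup>1)\<close> between
  \<open>d(\<lambda>\<^sup>k)\<close> and \<open>d(\<lambda>\<^sup>*)\<close> through \<open>\<L>\<^sub>\<beta>\<close> bounds the objective error by
  \<open>\<eta>\<^sub>k + O(\<parallel>r\<^sub>k\<parallel>)\<close>.\<close>

lemma convex_on_ge_linearization:
  fixes f :: "'a::real_normed_vector \<Rightarrow> real"
  assumes convex: "convex_on UNIV f" and deriv: "(f has_derivative f') (at y)"
  shows "f y + f' (z - y) \<le> f z"
proof -
  define h where "h t = f (y + t *\<^sub>R (z - y))" for t :: real
  have "convex_on UNIV h"
  proof (rule convex_onI)
    fix t u w :: real assume "0 < t" "t < 1"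
    have "y + ((1 - t) * u + t * w) *\<^sub>R (z - y)
        = (1 - t) *\<^sub>R (y + u *\<^sub>R (z - y)) + t *\<^sub>R (y + w *\<^sub>R (z - y))"
      by (simp add: algebra_simps)
    then show "h ((1 - t) *\<^sub>R u + t *\<^sub>R w) \<le> (1 - t) * h u + t * h w"
      unfolding h_def using \<open>0 < t\<close> \<open>t < 1\<close> by (simp add: convex_onD[OF convex])
  qed simp
  moreover have "(h has_field_derivative f' (z - y)) (at 0)"
  proof -
    have inner: "((\<lambda>t. y + t *\<^sub>R (z - y)) has_derivative (\<lambda>t. t *\<^sub>R (z - y))) (at 0)"
      by (auto intro!: derivative_eq_intros)
    have outer: "(f has_derivative f') (at (y + 0 *\<^sub>R (z - y)))"
      using deriv by simp
    have "(h has_derivative (\<lambda>t. f' (t *\<^sub>R (z - y)))) (at 0)"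
      unfolding h_def using has_derivative_compose[OF inner outer] .
    moreover have "(\<lambda>t. f' (t *\<^sub>R (z - y))) = (*) (f' (z - y))"
      using linear_scale[OF has_derivative_linear[OF deriv]] by (auto simp: mult.commute)
    ultimately show ?thesis by (simp add: has_field_derivative_def)
  qed
  ultimately have "f' (z - y) * (1 - 0) \<le> h 1 - h 0"
    by (intro convex_on_imp_above_tangent) auto
  then show ?thesis by (simp add: h_def)
qed

lemma fhat_ge_linearization:
  assumes convex: "convex_on UNIV f" and grad: "\<And>y. (f has_derivative (\<lambda>h. gf y \<bullet> h)) (at y)"
  shows "fhat f A b \<beta> \<mu> y + grad_fhat gf A b \<beta> \<mu> y \<bullet> (z - y) + \<beta> / 2 * (norm (A *v z - A *v y))^2
           \<le> fhat f A b \<beta> \<mu> z"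
proof -
  define r s where "r = A *v y - b" and "s = A *v z - b"
  have "A *v z - A *v y = s - r" "A *v (z - y) = s - r"
    by (simp_all add: r_def s_def matrix_vector_mult_diff_distrib)
  then have grad_eq: "grad_fhat gf A b \<beta> \<mu> y \<bullet> (z - y) = gf y \<bullet> (z - y) + \<mu> \<bullet> (s - r) + \<beta> * (r \<bullet> (s - r))"
    unfolding grad_fhat_def r_def[symmetric] by (simp add: inner_add_left dot_lmul_matrix)
  have "(norm s)^2 = (norm r)^2 + 2 * (r \<bullet> (s - r)) + (norm (s - r))^2"
    by (simp add: power2_norm_eq_inner algebra_simps inner_commute)
  then have "\<beta> / 2 * (norm s)^2 = \<beta> / 2 * (norm r)^2 + \<beta> * (r \<bullet> (s - r)) + \<beta> / 2 * (norm (s - r))^2"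
    by (simp add: ring_distribs)
  moreover have "\<mu> \<bullet> s = \<mu> \<bullet> r + \<mu> \<bullet> (s - r)" by (simp add: inner_diff_right)
  moreover have "f y + gf y \<bullet> (z - y) \<le> f z"
    using convex_on_ge_linearization[OF convex grad] .
  ultimately show ?thesis
    unfolding fhat_def grad_eq \<open>A *v z - A *v y = s - r\<close> r_def[symmetric] s_def[symmetric]
    by linarith
qed

lemma inverse_square_le_telescoping:
  fixes t c :: real
  assumes "1 \<le> t" "0 \<le> c"
  shows "c / t^2 \<le> 2 * c / t - 2 * c / (t + 1)"
proof -
  have "2 * c / t - 2 * c / (t + 1) = 2 * c / (t * (t + 1))"
    using assms by (simp add: field_simps)
  moreover have "2 * c / (2 * t^2) \<le> 2 * c / (t * (t + 1))"
    using assms by (intro frac_le) (auto simp: power2_eq_square algebra_simps intro: add_pos_nonneg)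
  ultimately show ?thesis by simp
qed

lemma telescoped_inverse_square_recursion:
  fixes u v :: "nat \<Rightarrow> real"
  assumes "0 \<le> c" "0 \<le> \<sigma>"
    and recursion: "\<And>k. k \<ge> 1 \<Longrightarrow> c * u (k + 1) + v (k + 1) \<le> v k + c * \<sigma> / (real k)^2"
    and "n \<ge> 1"
  shows "c * (\<Sum>j=2..n. u j) + v n \<le> v 1 + 2 * c * \<sigma>"
proof -
  have "c * (\<Sum>j=2..n. u j) + v n \<le> v 1 + 2 * c * \<sigma> - 2 * c * \<sigma> / real n"
    using \<open>n \<ge> 1\<close>
  proof (induction n rule: dec_induct)
    case (step k)
    have "c * \<sigma> / (real k)^2 \<le> 2 * (c * \<sigma>) / real k - 2 * (c * \<sigma>) / (real k + 1)"
      using step.hyps assms by (intro inverse_square_le_telescoping) auto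
    moreover have "(\<Sum>j=2..k + 1. u j) = (\<Sum>j=2..k. u j) + u (k + 1)"
      using step.hyps by simp
    ultimately show ?case
      using step.IH recursion[OF step.hyps(1)] by (simp add: algebra_simps)
  qed simp
  moreover have "0 \<le> 2 * c * \<sigma> / real n" using assms by simp
  ultimately show ?thesis by linarith
qed

lemma inverse_rate_of_summable_inverse_square_recursion:
  fixes \<delta> :: "nat \<Rightarrow> real"
  assumes nonneg: "\<And>k. 0 \<le> \<delta> k" and "0 \<le> \<sigma>"
    and recursion: "\<And>k. k \<ge> 1 \<Longrightarrow> \<delta> (k + 1) \<le> \<delta> k + \<sigma> / (real k)^2"
    and sum_bounded: "\<And>n. n \<ge> 2 \<Longrightarrow> (\<Sum>j=2..n. \<delta> j) \<le> S"
    and "n \<ge> 2"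
  shows "real n * \<delta> n \<le> 3 * (S + 2 * \<sigma>)"
proof -
  have potential_decreasing: "\<delta> n + 2 * \<sigma> / real n \<le> \<delta> j + 2 * \<sigma> / real j"
    if "1 \<le> j" "j \<le> n" for j n
    using \<open>j \<le> n\<close>
  proof (induction n rule: dec_induct)
    case (step k)
    have "\<sigma> / (real k)^2 \<le> 2 * \<sigma> / real k - 2 * \<sigma> / (real k + 1)"
      using step.hyps \<open>1 \<le> j\<close> \<open>0 \<le> \<sigma>\<close> by (intro inverse_square_le_telescoping) auto
    then show ?case
      using step.IH recursion[of k] step.hyps \<open>1 \<le> j\<close> by (simp add: add.commute)
  qed simp
  \<comment> \<open>Average the decreasing potential over the upper half of \<open>{2..n}\<close>; over all of \<open>{2..n}\<close>
    the harmonic sum would cost a logarithmic factor.\<close>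
  define K where "K = n div 2"
  have K: "1 \<le> K" "2 * K \<le> n" "n \<le> 3 * K" using \<open>n \<ge> 2\<close> unfolding K_def by auto
  have "real K * (\<delta> n + 2 * \<sigma> / real n) = (\<Sum>j=K+1..2*K. \<delta> n + 2 * \<sigma> / real n)" by simp
  also have "\<dots> \<le> (\<Sum>j=K+1..2*K. \<delta> j + 2 * \<sigma> / real j)"
    using K by (intro sum_mono potential_decreasing) auto
  also have "\<dots> = (\<Sum>j=K+1..2*K. \<delta> j) + (\<Sum>j=K+1..2*K. 2 * \<sigma> / real j)"
    by (simp add: sum.distrib)
  also have "(\<Sum>j=K+1..2*K. \<delta> j) \<le> (\<Sum>j=2..n. \<delta> j)"
    using K nonneg by (intro sum_mono2) auto
  also have "(\<Sum>j=K+1..2*K. 2 * \<sigma> / real j) \<le> (\<Sum>j=K+1..2*K. 2 * \<sigma> / real (K + 1))"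
    using \<open>0 \<le> \<sigma>\<close> by (intro sum_mono divide_left_mono) auto
  also have "\<dots> \<le> 2 * \<sigma>"
    using \<open>0 \<le> \<sigma>\<close> by (simp add: field_simps)
  finally have "real K * (\<delta> n + 2 * \<sigma> / real n) \<le> (\<Sum>j=2..n. \<delta> j) + 2 * \<sigma>"
    by simp
  moreover have "real K * \<delta> n \<le> real K * (\<delta> n + 2 * \<sigma> / real n)"
    using \<open>0 \<le> \<sigma>\<close> by (simp add: mult_left_mono)
  ultimately have "real K * \<delta> n \<le> S + 2 * \<sigma>"
    using sum_bounded[OF \<open>n \<ge> 2\<close>] by linarith
  moreover have "real n * \<delta> n \<le> real (3 * K) * \<delta> n"
    using K nonneg[of n] by (intro mult_right_mono) auto
  ultimately show ?thesis by simp
qed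

locale inexact_augmented_lagrangian =
  fixes f :: "real^'n \<Rightarrow> real" and gf :: "real^'n \<Rightarrow> real^'n" and g :: "real^'n \<Rightarrow> real"
    and D :: "(real^'n) set" and A :: "real^'n^'m" and b :: "real^'m" and \<beta> :: real
    and \<eta> :: "nat \<Rightarrow> real" and x :: "nat \<Rightarrow> real^'n" and lam :: "nat \<Rightarrow> real^'m"
  assumes f_convex: "convex_on UNIV f"
    and f_grad: "\<And>y. (f has_derivative (\<lambda>h. gf y \<bullet> h)) (at y)"
    and D_nonempty: "D \<noteq> {}"
    and D_bounded: "bounded D"
    and \<beta>_pos: "\<beta> > 0"
    and inexact: "\<And>k. k \<ge> 1 \<Longrightarrow> x (k + 1) \<in> D \<and>
        (\<forall>z\<in>D. grad_fhat gf A b \<beta> (lam k) (x (k + 1)) \<bullet> (x (k + 1) - z)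
                 + g (x (k + 1)) - g z \<le> \<eta> k)"
    and multiplier: "\<And>k. k \<ge> 1 \<Longrightarrow> lam (k + 1) = lam k + \<beta> *\<^sub>R (A *v x (k + 1) - b)"
begin

abbreviation auglag :: "real^'m \<Rightarrow> real^'n \<Rightarrow> real" where
  "auglag \<mu> z \<equiv> fhat f A b \<beta> \<mu> z + g z"

abbreviation dual :: "real^'m \<Rightarrow> real" where
  "dual \<mu> \<equiv> dual_fun f g D A b \<beta> \<mu>"

abbreviation residual :: "nat \<Rightarrow> real^'m" where
  "residual k \<equiv> A *v x (k + 1) - b"

lemma iterate_in_domain: "k \<ge> 1 \<Longrightarrow> x (k + 1) \<in> D"
  using inexact by blast

lemma eta_nonneg: "k \<ge> 1 \<Longrightarrow> 0 \<le> \<eta> k"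
  using inexact[of k] by force

lemma auglag_ge_at_iterate:
  assumes "k \<ge> 1" "z \<in> D"
  shows "auglag \<mu> (x (k + 1)) + (transpose A *v (\<mu> - lam k)) \<bullet> (z - x (k + 1))
           + \<beta> / 2 * (norm (A *v z - A *v x (k + 1)))^2 - \<eta> k \<le> auglag \<mu> z"
proof -
  let ?x = "x (k + 1)"
  have "grad_fhat gf A b \<beta> \<mu> ?x \<bullet> (z - ?x)
      = grad_fhat gf A b \<beta> (lam k) ?x \<bullet> (z - ?x) + (transpose A *v (\<mu> - lam k)) \<bullet> (z - ?x)"
    unfolding grad_fhat_def by (simp add: algebra_simps inner_add_left inner_diff_left)
  moreover have "grad_fhat gf A b \<beta> (lam k) ?x \<bullet> (?x - z) + g ?x - g z \<le> \<eta> k"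
    using inexact[OF \<open>k \<ge> 1\<close>] \<open>z \<in> D\<close> by blast
  moreover have "grad_fhat gf A b \<beta> (lam k) ?x \<bullet> (?x - z) = - (grad_fhat gf A b \<beta> (lam k) ?x \<bullet> (z - ?x))"
    by (simp add: inner_diff_right)
  ultimately show ?thesis
    using fhat_ge_linearization[OF f_convex f_grad, of A b \<beta> \<mu> ?x z] by linarith
qed

lemma bdd_below_auglag: "bdd_below (auglag \<mu> ` D)"
proof -
  obtain a where a: "\<And>z. z \<in> D \<Longrightarrow> norm z \<le> a"
    using D_bounded unfolding bounded_iff by blast
  define w where "w = transpose A *v (\<mu> - lam 1)"
  have x2: "x 2 \<in> D" using iterate_in_domain[of 1] by (simp add: numeral_2_eq_2)
  have "auglag \<mu> (x 2) - norm w * (2 * a) - \<eta> 1 \<le> auglag \<mu> z" if "z \<in> D" for z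
  proof -
    have "- (norm w * (2 * a)) \<le> w \<bullet> (z - x 2)"
    proof -
      have "norm (z - x 2) \<le> 2 * a"
        using norm_triangle_ineq4[of z "x 2"] a[OF \<open>z \<in> D\<close>] a[OF x2] by linarith
      then have "norm w * norm (z - x 2) \<le> norm w * (2 * a)" by (intro mult_left_mono) auto
      then show ?thesis using Cauchy_Schwarz_ineq2[of w "z - x 2"] by linarith
    qed
    moreover have "0 \<le> \<beta> / 2 * (norm (A *v z - A *v x 2))^2" using \<beta>_pos by simp
    ultimately show ?thesis
      using auglag_ge_at_iterate[of 1 z \<mu>] \<open>z \<in> D\<close> unfolding w_def by (simp add: numeral_2_eq_2)
  qed
  then show ?thesis unfolding bdd_below_def by blast
qed

lemma dual_le_auglag: "z \<in> D \<Longrightarrow> dual \<mu> \<le> auglag \<mu> z"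
  unfolding dual_fun_def by (rule cINF_lower[OF bdd_below_auglag])

lemma auglag_iterate_le_dual:
  assumes "k \<ge> 1"
  shows "auglag (lam k) (x (k + 1)) \<le> dual (lam k) + \<eta> k"
proof -
  have "auglag (lam k) (x (k + 1)) - \<eta> k \<le> dual (lam k)"
    unfolding dual_fun_def
  proof (rule cINF_greatest[OF D_nonempty])
    fix z assume "z \<in> D"
    have "0 \<le> \<beta> / 2 * (norm (A *v z - A *v x (k + 1)))^2" using \<beta>_pos by simp
    then show "auglag (lam k) (x (k + 1)) - \<eta> k \<le> auglag (lam k) z"
      using auglag_ge_at_iterate[OF assms \<open>z \<in> D\<close>, of "lam k"] by simp
  qed
  then show ?thesis by simp
qed

lemma dual_ascent:
  assumes "k \<ge> 1"
  shows "auglag (lam k) (x (k + 1)) - \<eta> k + \<beta> / 2 * (norm (residual k))^2 \<le> dual (lam (k + 1))"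
  unfolding dual_fun_def
proof (rule cINF_greatest[OF D_nonempty])
  fix z assume "z \<in> D"
  define r s where "r = residual k" and "s = A *v z - b"
  have "A *v z - A *v x (k + 1) = s - r" unfolding r_def s_def by simp
  then have "auglag (lam k) (x (k + 1)) + \<beta> / 2 * (norm (s - r))^2 - \<eta> k \<le> auglag (lam k) z"
    using auglag_ge_at_iterate[OF assms \<open>z \<in> D\<close>, of "lam k"] by simp
  moreover have "auglag (lam (k + 1)) z = auglag (lam k) z + \<beta> * (r \<bullet> s)"
    unfolding fhat_def multiplier[OF assms] r_def s_def by (simp add: inner_add_left)
  moreover have "(norm (s - r))^2 + 2 * (r \<bullet> s) = (norm s)^2 + (norm r)^2"
    by (simp add: power2_norm_eq_inner algebra_simps inner_commute)
  then have "\<beta> / 2 * (norm r)^2 \<le> \<beta> / 2 * ((norm (s - r))^2 + 2 * (r \<bullet> s))"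
    using \<beta>_pos by (intro mult_left_mono) auto
  then have "\<beta> / 2 * (norm r)^2 \<le> \<beta> / 2 * (norm (s - r))^2 + \<beta> * (r \<bullet> s)"
    by (simp add: algebra_simps)
  ultimately show "auglag (lam k) (x (k + 1)) - \<eta> k + \<beta> / 2 * (norm (residual k))^2 \<le> auglag (lam (k + 1)) z"
    unfolding r_def[symmetric] by linarith
qed

lemma dual_gap_descent:
  assumes "k \<ge> 1"
  shows "dual l - dual (lam (k + 1)) \<le> dual l - dual (lam k) - \<beta> / 2 * (norm (residual k))^2 + \<eta> k"
  using dual_ascent[OF assms] dual_le_auglag[OF iterate_in_domain[OF assms], of "lam k"] by linarith

lemma dual_gap_distance_descent:
  assumes "k \<ge> 1"
  shows "2 * \<beta> * (dual l - dual (lam (k + 1))) + (norm (lam (k + 1) - l))^2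
           \<le> (norm (lam k - l))^2 + 2 * \<beta> * \<eta> k"
proof -
  define p where "p = (lam k - l) \<bullet> residual k"
  have "lam (k + 1) - l = (lam k - l) + \<beta> *\<^sub>R residual k"
    using multiplier[OF assms] by simp
  then have distance: "(norm (lam (k + 1) - l))^2 = (norm (lam k - l))^2 + 2 * \<beta> * p + \<beta>^2 * (norm (residual k))^2"
    unfolding p_def power2_norm_eq_inner
    by (simp only:) (simp add: inner_add_left inner_add_right inner_commute power2_eq_square)
  have "auglag (lam k) (x (k + 1)) = auglag l (x (k + 1)) + p"
    unfolding fhat_def p_def by (simp add: inner_diff_left)
  then have "dual l - dual (lam (k + 1)) \<le> - p - \<beta> / 2 * (norm (residual k))^2 + \<eta> k"
    using dual_ascent[OF assms] dual_le_auglag[OF iterate_in_domain[OF assms], of l] by linarith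
  then have "2 * \<beta> * (dual l - dual (lam (k + 1))) \<le> 2 * \<beta> * (- p - \<beta> / 2 * (norm (residual k))^2 + \<eta> k)"
    using \<beta>_pos by (intro mult_left_mono) auto
  then show ?thesis unfolding distance by (simp add: algebra_simps power2_eq_square)
qed

lemma objective_error_le:
  assumes "k \<ge> 1" and dual_le: "dual (lam k) \<le> dual l"
    and lam_bounded: "norm (lam k) \<le> M" and l_bounded: "norm l \<le> M"
  shows "\<bar>f (x (k + 1)) + g (x (k + 1)) - dual l\<bar>
           \<le> \<eta> k + M * norm (residual k) + \<beta> / 2 * (norm (residual k))^2"
proof -
  let ?F = "f (x (k + 1)) + g (x (k + 1))" and ?R = "norm (residual k)"
  have upper: "?F + lam k \<bullet> residual k + \<beta> / 2 * ?R^2 \<le> dual l + \<eta> k"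
    using auglag_iterate_le_dual[OF \<open>k \<ge> 1\<close>] dual_le unfolding fhat_def by simp
  have lower: "dual l \<le> ?F + l \<bullet> residual k + \<beta> / 2 * ?R^2"
    using dual_le_auglag[OF iterate_in_domain[OF \<open>k \<ge> 1\<close>], of l] unfolding fhat_def by simp
  have "\<bar>lam k \<bullet> residual k\<bar> \<le> M * ?R"
    using Cauchy_Schwarz_ineq2[of "lam k" "residual k"] lam_bounded mult_right_mono[of _ M ?R] by force
  moreover have "\<bar>l \<bullet> residual k\<bar> \<le> M * ?R"
    using Cauchy_Schwarz_ineq2[of l "residual k"] l_bounded mult_right_mono[of _ M ?R] by force
  moreover have "0 \<le> \<beta> / 2 * ?R^2" "0 \<le> \<eta> k"
    using \<beta>_pos eta_nonneg[OF \<open>k \<ge> 1\<close>] by simp_all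
  ultimately show ?thesis using upper lower by (simp add: abs_le_iff)
qed

context
  fixes \<sigma> :: real and lams :: "real^'m"
  assumes \<sigma>_pos: "\<sigma> > 0"
    and \<eta>_inverse_square: "\<And>k. \<eta> k = \<sigma> / (real k)^2"
    and lams_max: "\<And>l. dual l \<le> dual lams"
begin

lemma dual_gap_nonneg: "0 \<le> dual lams - dual (lam k)"
  using lams_max by simp

lemma dual_gap_sum_distance_bounded:
  assumes "n \<ge> 1"
  shows "2 * \<beta> * (\<Sum>j=2..n. dual lams - dual (lam j)) + (norm (lam n - lams))^2
           \<le> (norm (lam 1 - lams))^2 + 4 * \<beta> * \<sigma>"
proof -
  have "2 * \<beta> * (\<Sum>j=2..n. dual lams - dual (lam j)) + (norm (lam n - lams))^2
          \<le> (norm (lam 1 - lams))^2 + 2 * (2 * \<beta>) * \<sigma>"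
  proof (rule telescoped_inverse_square_recursion[OF _ _ _ assms])
    show "2 * \<beta> * (dual lams - dual (lam (k + 1))) + (norm (lam (k + 1) - lams))^2
            \<le> (norm (lam k - lams))^2 + 2 * \<beta> * \<sigma> / (real k)^2" if "k \<ge> 1" for k
      using dual_gap_distance_descent[OF that, of lams] \<eta>_inverse_square[of k] by simp
  qed (use \<beta>_pos \<sigma>_pos in auto)
  then show ?thesis by simp
qed

lemma dual_gap_bigo: "(\<lambda>k. dual lams - dual (lam k)) \<in> O(\<lambda>k. 1 / real k)"
proof -
  define S where "S = ((norm (lam 1 - lams))^2 + 4 * \<beta> * \<sigma>) / (2 * \<beta>)"
  have "real n * (dual lams - dual (lam n)) \<le> 3 * (S + 2 * \<sigma>)" if "n \<ge> 2" for n
  proof (rule inverse_rate_of_summable_inverse_square_recursion[OF dual_gap_nonneg _ _ _ that])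
    show "dual lams - dual (lam (k + 1)) \<le> dual lams - dual (lam k) + \<sigma> / (real k)^2"
      if "k \<ge> 1" for k
    proof -
      have "0 \<le> \<beta> / 2 * (norm (residual k))^2" using \<beta>_pos by simp
      then show ?thesis
        using dual_gap_descent[OF that, of lams] \<eta>_inverse_square[of k] by linarith
    qed
    show "(\<Sum>j=2..n. dual lams - dual (lam j)) \<le> S" if "n \<ge> 2" for n
    proof -
      have "2 * \<beta> * (\<Sum>j=2..n. dual lams - dual (lam j)) \<le> (norm (lam 1 - lams))^2 + 4 * \<beta> * \<sigma>"
        using dual_gap_sum_distance_bounded[of n] that zero_le_power2[of "norm (lam n - lams)"]
        by linarith
      then show ?thesis using \<beta>_pos unfolding S_def by (simp add: field_simps)
    qed
  qed (use \<sigma>_pos in simp)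
  then have "\<forall>\<^sub>F n in at_top. norm (dual lams - dual (lam n)) \<le> 3 * (S + 2 * \<sigma>) * norm (1 / real n)"
    unfolding eventually_at_top_linorder using dual_gap_nonneg
    by (intro exI[of _ 2]) (auto simp: field_simps)
  then show ?thesis by (rule bigoI)
qed

lemma residual_sq_bigo: "(\<lambda>k. (norm (residual k))^2) \<in> O(\<lambda>k. 1 / real k)"
proof -
  have "\<forall>\<^sub>F k in at_top. norm ((norm (residual k))^2)
          \<le> 2 / \<beta> * norm (dual lams - dual (lam k) + \<eta> k)"
    unfolding eventually_at_top_linorder
  proof (intro exI[of _ 1] allI impI)
    fix k :: nat assume "k \<ge> 1"
    have "\<beta> / 2 * (norm (residual k))^2 \<le> dual lams - dual (lam k) + \<eta> k"
      using dual_gap_descent[OF \<open>k \<ge> 1\<close>, of lams] dual_gap_nonneg[of "k + 1"] by linarith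
    then show "norm ((norm (residual k))^2) \<le> 2 / \<beta> * norm (dual lams - dual (lam k) + \<eta> k)"
      using \<beta>_pos eta_nonneg[OF \<open>k \<ge> 1\<close>] dual_gap_nonneg[of k] by (simp add: field_simps)
  qed
  then have "(\<lambda>k. (norm (residual k))^2) \<in> O(\<lambda>k. dual lams - dual (lam k) + \<eta> k)"
    by (rule bigoI)
  also have "(\<lambda>k. dual lams - dual (lam k) + \<eta> k) \<in> O(\<lambda>k. 1 / real k)"
  proof (rule sum_in_bigo(1)[OF dual_gap_bigo])
    show "\<eta> \<in> O(\<lambda>k. 1 / real k)"
      unfolding \<eta>_inverse_square[abs_def] by real_asymp
  qed
  finally show ?thesis .
qed

lemma multipliers_bounded:
  obtains M where "M > 0" "\<And>k. k \<ge> 1 \<Longrightarrow> norm (lam k) \<le> M" "norm lams \<le> M"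
proof
  define Q where "Q = (norm (lam 1 - lams))^2 + 4 * \<beta> * \<sigma>"
  have "0 \<le> Q" using \<beta>_pos \<sigma>_pos unfolding Q_def by (intro add_nonneg_nonneg) auto
  show "0 < norm lams + sqrt Q"
    using \<beta>_pos \<sigma>_pos unfolding Q_def by (simp add: add_nonneg_pos)
  show "norm lams \<le> norm lams + sqrt Q" using \<open>0 \<le> Q\<close> by simp
  show "norm (lam k) \<le> norm lams + sqrt Q" if "k \<ge> 1" for k
  proof -
    have "0 \<le> 2 * \<beta> * (\<Sum>j=2..k. dual lams - dual (lam j))"
      using \<beta>_pos dual_gap_nonneg by (simp add: sum_nonneg)
    then have "(norm (lam k - lams))^2 \<le> Q"
      using dual_gap_sum_distance_bounded[OF that] unfolding Q_def by linarith
    then have "norm (lam k - lams) \<le> sqrt Q"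
      using real_le_rsqrt by blast
    then show ?thesis using norm_triangle_sub[of "lam k" lams] by linarith
  qed
qed

lemma objective_error_bigo:
  "(\<lambda>k. \<bar>f (x (k + 1)) + g (x (k + 1)) - dual lams\<bar>) \<in> O(\<lambda>k. 1 / sqrt (real k))"
proof -
  obtain M where "M > 0" and M: "\<And>k. k \<ge> 1 \<Longrightarrow> norm (lam k) \<le> M" "norm lams \<le> M"
    using multipliers_bounded by blast
  have residual_bigo: "(\<lambda>k. norm (residual k)) \<in> O(\<lambda>k. 1 / sqrt (real k))"
    using bigo_powr[OF residual_sq_bigo, of "1 / 2"]
    by (simp add: powr_half_sqrt real_sqrt_divide)
  have "\<forall>\<^sub>F k in at_top. norm \<bar>f (x (k + 1)) + g (x (k + 1)) - dual lams\<bar>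
          \<le> norm (\<eta> k + M * norm (residual k) + \<beta> / 2 * (norm (residual k))^2)"
    unfolding eventually_at_top_linorder
    using objective_error_le[OF _ lams_max M(1) M(2)]
    by (intro exI[of _ 1]) (force intro: order_trans[OF _ abs_ge_self])
  then have "(\<lambda>k. \<bar>f (x (k + 1)) + g (x (k + 1)) - dual lams\<bar>)
      \<in> O(\<lambda>k. \<eta> k + M * norm (residual k) + \<beta> / 2 * (norm (residual k))^2)"
    by (rule landau_o.big_mono)
  also have "(\<lambda>k. \<eta> k + M * norm (residual k) + \<beta> / 2 * (norm (residual k))^2) \<in> O(\<lambda>k. 1 / sqrt (real k))"
  proof (intro sum_in_bigo(1))
    show "\<eta> \<in> O(\<lambda>k. 1 / sqrt (real k))"
      unfolding \<eta>_inverse_square[abs_def] by real_asymp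
    show "(\<lambda>k. M * norm (residual k)) \<in> O(\<lambda>k. 1 / sqrt (real k))"
      using residual_bigo \<open>M > 0\<close> by simp
    have "(\<lambda>k. 1 / real k) \<in> O(\<lambda>k. 1 / sqrt (real k))" by real_asymp
    with residual_sq_bigo show "(\<lambda>k. \<beta> / 2 * (norm (residual k))^2) \<in> O(\<lambda>k. 1 / sqrt (real k))"
      using \<beta>_pos by (simp add: landau_o.big_trans)
  qed
  finally show ?thesis .
qed

end

end

theorem corollary1:
  fixes f :: "real^'n \<Rightarrow> real" and gf :: "real^'n \<Rightarrow> real^'n"
    and g :: "real^'n \<Rightarrow> real" and D :: "(real^'n) set"
    and A :: "real^'n^'m" and b :: "real^'m"
    and \<beta> \<sigma> :: real
    and xs :: "real^'n" and lams :: "real^'m"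
    and x :: "nat \<Rightarrow> real^'n" and lam :: "nat \<Rightarrow> real^'m"
  assumes f_convex: "convex_on UNIV f"
    and f_grad: "\<And>y. (f has_derivative (\<lambda>h. gf y \<bullet> h)) (at y)"
    and f_lip: "\<exists>L. \<forall>y z. norm (gf y - gf z) \<le> L * norm (y - z)"
    and D_nonempty: "D \<noteq> {}"
    and D_convex: "convex D"
    and g_convex: "convex_on D g"
    and g_closed: "closed {(y, t). y \<in> D \<and> g y \<le> t}"
    and D_bounded: "bounded D"
    and \<beta>_pos: "\<beta> > 0"
    and xs_feas: "xs \<in> D" "A *v xs = b"
    and xs_opt: "\<And>y. y \<in> D \<Longrightarrow> A *v y = b \<Longrightarrow> f xs + g xs \<le> f y + g y"
    and lams_opt: "\<And>l. dual_fun f g D A b \<beta> l \<le> dual_fun f g D A b \<beta> lams"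
    and strong_duality: "dual_fun f g D A b \<beta> lams = f xs + g xs"
    and \<sigma>_pos: "\<sigma> > 0"
    and x1: "x 1 \<in> D"
    and inexact: "\<And>k. k \<ge> 1 \<Longrightarrow> x (k + 1) \<in> D \<and>
        (\<forall>z\<in>D. grad_fhat gf A b \<beta> (lam k) (x (k + 1)) \<bullet> (x (k + 1) - z)
                 + g (x (k + 1)) - g z \<le> \<sigma> / (real k)^2)"
    and multiplier: "\<And>k. k \<ge> 1 \<Longrightarrow> lam (k + 1) = lam k + \<beta> *\<^sub>R (A *v x (k + 1) - b)"
  shows "(\<lambda>k. dual_fun f g D A b \<beta> lams - dual_fun f g D A b \<beta> (lam k)) \<in> O(\<lambda>k. 1 / real k)
    \<and> (\<lambda>k. (norm (A *v x (k + 1) - b))^2) \<in> O(\<lambda>k. 1 / real k)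
    \<and> (\<lambda>k. \<bar>(f (x (k + 1)) + g (x (k + 1))) - (f xs + g xs)\<bar>) \<in> O(\<lambda>k. 1 / sqrt (real k))"
proof -
  interpret inexact_augmented_lagrangian f gf g D A b \<beta> "\<lambda>k. \<sigma> / (real k)^2" x lam
    using f_convex f_grad D_nonempty D_bounded \<beta>_pos inexact multiplier by unfold_locales auto
  show ?thesis
    using dual_gap_bigo[OF \<sigma>_pos refl lams_opt] residual_sq_bigo[OF \<sigma>_pos refl lams_opt]
      objective_error_bigo[OF \<sigma>_pos refl lams_opt]
    unfolding strong_duality by simp
qed

end
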